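(* Let $A$ be a Banach algebra, $(\pi_1,X,\pi_2)$ a Banach $A$-module and $D:A\to X^*$ a derivation. Then for all $a^{**},b^{**}\in A^{**}$: (i) $D^{**}(a^{**}\Box b^{**})=\pi_1^{****}(D^{**}(a^{**}),b^{**})+\pi_2^{r*r***}(a^{**},D^{**}(b^{**}))$; (ii) $D^{**}(a^{**}\lozenge b^{**})=\pi_1^{*r***r}(D^{**}(a^{**}),b^{**})+\pi_2^{r****r}(a^{**},D^{**}(b^{**}))$.
   Context: Normed spaces are identified with their canonical images in their second duals. For a bounded bilinear map $f:X\times Y\to Z$, the adjoint $f^*:Z^*\times X\to Y^*$ is defined by $\langle f^*(z^*,x),y\rangle=\langle z^*,f(x,y)\rangle$; iterating gives $f^{**}:Y^{**}\times Z^*\to X^*$, $f^{***}:X^{**}\times Y^{**}\to Z^{**}$, $f^{****}:Z^{***}\times X^{**}\to Y^{***}$, etc. The flip is $f^r(y,x)=f(x,y)$; superscripts are applied successively left to right (e.g. $\pi_2^{r*r***}$: flip $\pi_2$, adjoint, flip, three adjoints; $\pi_1^{*r***r}$: adjoint, flip, three adjoints, flip). For the multiplication $\pi$ of $A$, the Arens products on $A^{**}$ are $a^{**}\Box b^{**}=\pi^{***}(a^{**},b^{**})$ and $a^{**}\lozenge b^{**}=\pi^{r***r}(a^{**},b^{**})$. A Banach $A$-module $(\pi_1,X,\pi_2)$ consists of a Banach space $X$ and bounded bilinear maps $\pi_1:A\times X\to X$, $\pi_2:X\times A\to X$ with $\pi_1(ab,x)=\pi_1(a,\pi_1(b,x))$,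 $\pi_2(x,ab)=\pi_2(\pi_2(x,a),b)$, $\pi_1(a,\pi_2(x,b))=\pi_2(\pi_1(a,x),b)$. A derivation $D:A\to X^*$ is a bounded linear map with $D(ab)=\pi_1^*(D(a),b)+\pi_2^{r*r}(a,D(b))$ for all $a,b\in A$ (here $\pi_1^*:X^*\times A\to X^*$ and $\pi_2^{r*r}:A\times X^*\to X^*$ are the dual module actions). $D^{**}:A^{**}\to X^{***}$ is the second adjoint of $D$. *)

theory Defs
  imports "HOL-Analysis.Analysis"
begin

definition flip :: "('x \<Rightarrow> 'y \<Rightarrow> 'z) \<Rightarrow> 'y \<Rightarrow> 'x \<Rightarrow> 'z" where
  "flip f y x = f x y"

definition adj :: "('x \<Rightarrow> 'y::real_normed_vector \<Rightarrow> 'z::real_normed_vector)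
    \<Rightarrow> ('z \<Rightarrow>\<^sub>L real) \<Rightarrow> 'x \<Rightarrow> ('y \<Rightarrow>\<^sub>L real)" where
  "adj f zs x = Blinfun (\<lambda>y. blinfun_apply zs (f x y))"

definition ladj :: "('e::real_normed_vector \<Rightarrow>\<^sub>L 'f::real_normed_vector)
    \<Rightarrow> (('f \<Rightarrow>\<^sub>L real) \<Rightarrow>\<^sub>L ('e \<Rightarrow>\<^sub>L real))" where
  "ladj T = Blinfun (\<lambda>g. g o\<^sub>L T)"

definition banach_module ::
  "('a::real_normed_algebra \<Rightarrow> 'x::banach \<Rightarrow> 'x) \<Rightarrow> ('x \<Rightarrow> 'a \<Rightarrow> 'x) \<Rightarrow> bool" where
  "banach_module \<pi>1 \<pi>2 \<longleftrightarrow> bounded_bilinear \<pi>1 \<and> bounded_bilinear \<pi>2 \<and>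
     (\<forall>a b x. \<pi>1 (a * b) x = \<pi>1 a (\<pi>1 b x)) \<and>
     (\<forall>a b x. \<pi>2 x (a * b) = \<pi>2 (\<pi>2 x a) b) \<and>
     (\<forall>a b x. \<pi>1 a (\<pi>2 x b) = \<pi>2 (\<pi>1 a x) b)"

text \<open>Derivation D : A -> X*: D(ab) = pi1*(D a, b) + pi2^{r*r}(a, D b).\<close>
definition derivation ::
  "('a::real_normed_algebra \<Rightarrow> 'x::real_normed_vector \<Rightarrow> 'x) \<Rightarrow> ('x \<Rightarrow> 'a \<Rightarrow> 'x)
     \<Rightarrow> ('a \<Rightarrow>\<^sub>L ('x \<Rightarrow>\<^sub>L real)) \<Rightarrow> bool" where
  "derivation \<pi>1 \<pi>2 D \<longleftrightarrow> (\<forall>a b. blinfun_apply D (a * b) =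
      adj \<pi>1 (blinfun_apply D a) b + flip (adj (flip \<pi>2)) a (blinfun_apply D b))"

end

theory Submission
  imports Defs
begin

text \<open>
  The derivation law says that the bilinear map \<open>G(a, b) = D(ab)\<close> splits as
  \<open>\<pi>\<^sub>1\<^sup>*(D a, b) + \<pi>\<^sub>2\<^sup>r\<^sup>*\<^sup>r(a, D b)\<close>. Taking adjoints of a bilinear map is additive, and composing
  with a bounded operator \<open>T\<close> in one slot turns into composing with \<open>T\<^sup>*\<close> in the neighbouring
  slot (output, first argument, second argument, cyclically). After three adjoints every
  operator is back in its original slot as its second adjoint, so the splitting of \<open>G\<close>
  lifts to \<open>D\<^sup>*\<^sup>*(a\<^sup>*\<^sup>* \<box> b\<^sup>*\<^sup>*)\<close>, which is (i). Part (ii) is the same argument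
  applied to the flipped map \<open>(b, a) \<mapsto> D(ab)\<close>.
\<close>

lemma flip_apply: "flip f y x = f x y"
  by (simp add: flip_def)

lemma bounded_bilinear_flip: "bounded_bilinear f \<Longrightarrow> bounded_bilinear (flip f)"
  unfolding flip_def by (rule bounded_bilinear.flip)

lemma ladj_apply: "blinfun_apply (ladj T) g = g o\<^sub>L T"
  unfolding ladj_def
  by (simp add: bounded_linear_Blinfun_apply
      bounded_bilinear.bounded_linear_left[OF bounded_bilinear_blinfun_compose])

lemma bounded_linear_functional_compose_right:
  "bounded_bilinear f \<Longrightarrow> bounded_linear (\<lambda>y. blinfun_apply zs (f x y))"
  by (rule bounded_linear_compose[OF blinfun.bounded_linear_right
        bounded_bilinear.bounded_linear_right])

lemma adj_apply:
  assumes "bounded_bilinear f"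
  shows "blinfun_apply (adj f zs x) y = blinfun_apply zs (f x y)"
  unfolding adj_def
  by (simp add: bounded_linear_Blinfun_apply bounded_linear_functional_compose_right[OF assms])

lemma bounded_bilinear_adj:
  assumes bb: "bounded_bilinear f"
  shows "bounded_bilinear (adj f)"
proof
  fix a a' b b' and r :: real
  show "adj f (a + a') b = adj f a b + adj f a' b"
    by (rule blinfun_eqI) (simp add: adj_apply[OF bb] blinfun.add_left)
  show "adj f a (b + b') = adj f a b + adj f a b'"
    by (rule blinfun_eqI)
      (simp add: adj_apply[OF bb] bounded_bilinear.add_left[OF bb] blinfun.add_right
        plus_blinfun.rep_eq)
  show "adj f (r *\<^sub>R a) b = r *\<^sub>R adj f a b"
    by (rule blinfun_eqI) (simp add: adj_apply[OF bb] scaleR_blinfun.rep_eq)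
  show "adj f a (r *\<^sub>R b) = r *\<^sub>R adj f a b"
    by (rule blinfun_eqI)
      (simp add: adj_apply[OF bb] bounded_bilinear.scaleR_left[OF bb] blinfun.scaleR_right
        scaleR_blinfun.rep_eq)
  obtain K where K: "\<And>a b. norm (f a b) \<le> norm a * norm b * K" and "K > 0"
    using bounded_bilinear.pos_bounded[OF bb] by blast
  have "norm (adj f zs x) \<le> norm zs * norm x * K" for zs x
  proof (rule norm_blinfun_bound)
    show "0 \<le> norm zs * norm x * K"
      using \<open>K > 0\<close> by simp
    fix y
    have "norm (blinfun_apply zs (f x y)) \<le> norm zs * norm (f x y)"
      by (rule norm_blinfun)
    also have "\<dots> \<le> norm zs * (norm x * norm y * K)"
      by (rule mult_left_mono[OF K]) simp
    finally show "norm (blinfun_apply (adj f zs x) y) \<le> norm zs * norm x * K * norm y"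
      by (simp add: adj_apply[OF bb] mult_ac)
  qed
  then show "\<exists>K. \<forall>a b. norm (adj f a b) \<le> norm a * norm b * K"
    by blast
qed

lemma adj_add:
  assumes "bounded_bilinear f" and "bounded_bilinear g"
  shows "adj (\<lambda>x y. f x y + g x y) = (\<lambda>z x. adj f z x + adj g z x)"
proof (intro ext blinfun_eqI)
  fix z :: "_ \<Rightarrow>\<^sub>L real" and x y
  have "bounded_linear (\<lambda>y. blinfun_apply z (f x y + g x y))"
    using assms by (simp add: blinfun.add_right bounded_linear_add
        bounded_linear_functional_compose_right)
  then show "blinfun_apply (adj (\<lambda>x y. f x y + g x y) z x) y
      = blinfun_apply (adj f z x + adj g z x) y"
    by (simp add: adj_def[of "\<lambda>x y. f x y + g x y"] bounded_linear_Blinfun_apply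
        plus_blinfun.rep_eq blinfun.add_right adj_apply assms)
qed

lemma adj_compose_left:
  "adj (\<lambda>x y. blinfun_apply T (f x y)) = (\<lambda>w x. adj f (blinfun_apply (ladj T) w) x)"
  by (intro ext) (simp add: adj_def ladj_apply)

lemma adj_compose_first:
  "adj (\<lambda>x y. f (blinfun_apply S x) y) = (\<lambda>z x. adj f z (blinfun_apply S x))"
  by (intro ext) (simp add: adj_def)

lemma adj_compose_second:
  assumes "bounded_bilinear f"
  shows "adj (\<lambda>x y. f x (blinfun_apply S y)) = (\<lambda>z x. blinfun_apply (ladj S) (adj f z x))"
proof -
  have "bounded_bilinear (\<lambda>x y. f x (blinfun_apply S y))"
    using bounded_bilinear.comp[OF assms bounded_linear_ident blinfun.bounded_linear_right] .
  then show ?thesis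
    by (intro ext blinfun_eqI) (simp add: ladj_apply adj_apply[OF assms] adj_apply)
qed

lemma adj3_add:
  assumes "bounded_bilinear f" and "bounded_bilinear g"
  shows "adj (adj (adj (\<lambda>x y. f x y + g x y)))
    = (\<lambda>x y. adj (adj (adj f)) x y + adj (adj (adj g)) x y)"
  by (simp add: adj_add assms bounded_bilinear_adj)

lemma adj3_compose_left:
  assumes "bounded_bilinear f"
  shows "adj (adj (adj (\<lambda>x y. blinfun_apply T (f x y))))
    = (\<lambda>x y. blinfun_apply (ladj (ladj T)) (adj (adj (adj f)) x y))"
  by (simp add: adj_compose_left adj_compose_first adj_compose_second assms bounded_bilinear_adj)

lemma adj3_compose_first:
  assumes "bounded_bilinear f"
  shows "adj (adj (adj (\<lambda>x y. f (blinfun_apply S x) y)))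
    = (\<lambda>x y. adj (adj (adj f)) (blinfun_apply (ladj (ladj S)) x) y)"
  by (simp add: adj_compose_left adj_compose_first adj_compose_second assms bounded_bilinear_adj)

lemma adj3_compose_second:
  assumes "bounded_bilinear f"
  shows "adj (adj (adj (\<lambda>x y. f x (blinfun_apply S y))))
    = (\<lambda>x y. adj (adj (adj f)) x (blinfun_apply (ladj (ladj S)) y))"
  by (simp add: adj_compose_left adj_compose_first adj_compose_second assms bounded_bilinear_adj)

lemma adj3_lift_identity:
  assumes f: "bounded_bilinear f" and g: "bounded_bilinear g" and h: "bounded_bilinear h"
    and identity: "\<And>x y. blinfun_apply T (f x y)
      = g (blinfun_apply S x) y + h x (blinfun_apply R y)"
  shows "blinfun_apply (ladj (ladj T)) (adj (adj (adj f)) x y)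
    = adj (adj (adj g)) (blinfun_apply (ladj (ladj S)) x) y
      + adj (adj (adj h)) x (blinfun_apply (ladj (ladj R)) y)"
proof -
  have gS: "bounded_bilinear (\<lambda>x y. g (blinfun_apply S x) y)"
    using bounded_bilinear.comp1[OF g blinfun.bounded_linear_right] .
  have hR: "bounded_bilinear (\<lambda>x y. h x (blinfun_apply R y))"
    using bounded_bilinear.comp[OF h bounded_linear_ident blinfun.bounded_linear_right] .
  have "blinfun_apply (ladj (ladj T)) (adj (adj (adj f)) x y)
      = adj (adj (adj (\<lambda>x y. blinfun_apply T (f x y)))) x y"
    by (simp add: adj3_compose_left f)
  also have "\<dots> = adj (adj (adj (\<lambda>x y. g (blinfun_apply S x) y + h x (blinfun_apply R y)))) x y"
    by (simp add: identity)
  also have "\<dots> = adj (adj (adj (\<lambda>x y. g (blinfun_apply S x) y))) x y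
      + adj (adj (adj (\<lambda>x y. h x (blinfun_apply R y)))) x y"
    by (simp add: adj3_add gS hR)
  finally show ?thesis
    by (simp add: adj3_compose_first adj3_compose_second g h)
qed

theorem lemma4p1:
  fixes \<pi>1 :: "'a::{real_normed_algebra,banach} \<Rightarrow> 'x::banach \<Rightarrow> 'x"
    and \<pi>2 :: "'x \<Rightarrow> 'a \<Rightarrow> 'x"
    and D :: "'a \<Rightarrow>\<^sub>L ('x \<Rightarrow>\<^sub>L real)"
    and a2 b2 :: "('a \<Rightarrow>\<^sub>L real) \<Rightarrow>\<^sub>L real"
  assumes "banach_module \<pi>1 \<pi>2"
    and "derivation \<pi>1 \<pi>2 D"
  shows "(blinfun_apply (ladj (ladj D)) (adj (adj (adj (*))) a2 b2) =
           adj (adj (adj (adj \<pi>1))) (blinfun_apply (ladj (ladj D)) a2) b2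
         + adj (adj (adj (flip (adj (flip \<pi>2))))) a2 (blinfun_apply (ladj (ladj D)) b2))
       \<and> (blinfun_apply (ladj (ladj D)) (flip (adj (adj (adj (flip (*))))) a2 b2) =
           flip (adj (adj (adj (flip (adj \<pi>1))))) (blinfun_apply (ladj (ladj D)) a2) b2
         + flip (adj (adj (adj (adj (flip \<pi>2))))) a2 (blinfun_apply (ladj (ladj D)) b2))"
proof
  have \<pi>1: "bounded_bilinear \<pi>1" and \<pi>2: "bounded_bilinear \<pi>2"
    using assms(1) unfolding banach_module_def by auto
  have D_mult: "blinfun_apply D (a * b)
      = adj \<pi>1 (blinfun_apply D a) b + flip (adj (flip \<pi>2)) a (blinfun_apply D b)" for a b
    using assms(2) unfolding derivation_def by auto
  note bilinear = bounded_bilinear_mult bounded_bilinear_flip bounded_bilinear_adj \<pi>1 \<pi>2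
  show "blinfun_apply (ladj (ladj D)) (adj (adj (adj (*))) a2 b2) =
      adj (adj (adj (adj \<pi>1))) (blinfun_apply (ladj (ladj D)) a2) b2
      + adj (adj (adj (flip (adj (flip \<pi>2))))) a2 (blinfun_apply (ladj (ladj D)) b2)"
    by (rule adj3_lift_identity) (simp_all add: bilinear D_mult)
  have D_mult_flipped: "blinfun_apply D (flip (*) b a)
      = adj (flip \<pi>2) (blinfun_apply D b) a + flip (adj \<pi>1) b (blinfun_apply D a)" for a b
    by (simp add: D_mult flip_apply)
  have "blinfun_apply (ladj (ladj D)) (adj (adj (adj (flip (*)))) b2 a2)
      = adj (adj (adj (adj (flip \<pi>2)))) (blinfun_apply (ladj (ladj D)) b2) a2
        + adj (adj (adj (flip (adj \<pi>1)))) b2 (blinfun_apply (ladj (ladj D)) a2)"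
    by (rule adj3_lift_identity) (simp_all add: bilinear D_mult_flipped)
  then show "blinfun_apply (ladj (ladj D)) (flip (adj (adj (adj (flip (*))))) a2 b2) =
      flip (adj (adj (adj (flip (adj \<pi>1))))) (blinfun_apply (ladj (ladj D)) a2) b2
      + flip (adj (adj (adj (adj (flip \<pi>2))))) a2 (blinfun_apply (ladj (ladj D)) b2)"
    by (simp add: flip_apply add.commute)
qed

end
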